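(* The functional $\mathcal{E}^{\rm TF}$ is uniformly bounded from below on $\mathcal{M}^{\rm TF}$. Moreover, for any $p>1$, it is lower semicontinuous on $\mathcal{M}^{\rm TF}$ under strong convergence in $L^1(\mathbb{R}^2)\cap L^p(\mathbb{R}^2)$.
   Context: Let $K\ge1$ be an integer and $x_1,\ldots,x_K\in\mathbb{R}^2$. Set $V_{\rm nuc}(x)=-\sum_{i=1}^K\log|x-x_i|$, $D(\sigma,\sigma)=-\frac12\iint\sigma(x)\log|x-y|\sigma(y)\,dx\,dy$, and $\mathcal{E}^{\rm TF}[\sigma]=-\int_{\mathbb{R}^2}V_{\rm nuc}\sigma+D(\sigma,\sigma)$, on $\mathcal{M}^{\rm TF}=\{\sigma\in L^\infty(\mathbb{R}^2)\cap L^1(\mathbb{R}^2,\log(2+|x|)dx):0\leq\sigma\leq1,\ \int\sigma=K\}$. *)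

theory Defs
  imports "HOL-Analysis.Analysis"
begin

definition V_nuc :: "nat \<Rightarrow> (nat \<Rightarrow> real^2) \<Rightarrow> real^2 \<Rightarrow> real" where
  "V_nuc K xs x = - (\<Sum>i=1..K. ln (norm (x - xs i)))"

definition D_TF :: "(real^2 \<Rightarrow> real) \<Rightarrow> (real^2 \<Rightarrow> real) \<Rightarrow> real" where
  "D_TF \<sigma> \<tau> = - (1/2) * (\<integral>z. \<sigma> (fst z) * ln (norm (fst z - snd z)) * \<tau> (snd z)
                          \<partial>(lborel \<Otimes>\<^sub>M lborel))"

definition E_TF :: "nat \<Rightarrow> (nat \<Rightarrow> real^2) \<Rightarrow> (real^2 \<Rightarrow> real) \<Rightarrow> real" where
  "E_TF K xs \<sigma> = - (\<integral>x. V_nuc K xs x * \<sigma> x \<partial>lborel) + D_TF \<sigma> \<sigma>"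

definition M_TF :: "nat \<Rightarrow> (real^2 \<Rightarrow> real) set" where
  "M_TF K = {\<sigma>. \<sigma> \<in> borel_measurable lborel
              \<and> (AE x in lborel. 0 \<le> \<sigma> x \<and> \<sigma> x \<le> 1)
              \<and> integrable lborel (\<lambda>x. \<sigma> x * ln (2 + norm x))
              \<and> (\<integral>x. \<sigma> x \<partial>lborel) = real K}"

end

theory Submission
  imports Defs "HOL-Analysis.Ball_Volume"
begin

text \<open>Split \<open>ln = ln\<^sub>+ - ln\<^sub>-\<close>. The negative part \<open>ln\<^sub>- |x - c|\<close> is integrable
  (it is dominated by \<open>ln 2\<close> times the sum of the indicators of the balls of radius
  \<open>2\<^sup>-\<^sup>k\<close> around \<open>c\<close>), and the positive part grows no faster than the weight
  \<open>ln (2 + |x|)\<close> of the admissible class. Averaging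
  \<open>ln |x - y| \<le> ln 2 + ln\<^sub>+ |x - c| + ln\<^sub>+ |y - c|\<close> over the nuclei \<open>c = x\<^sub>i\<close> yields the
  nonnegative kernel
    \<open>H(x,y) = ln 2 + (\<Sum>\<^sub>i ln\<^sub>+ |x - x\<^sub>i| + \<Sum>\<^sub>i ln\<^sub>+ |y - x\<^sub>i|) / K - ln |x - y|\<close>,
  and, since \<open>\<integral>\<sigma> = K\<close>,
    \<open>E(\<sigma>) = \<integral>\<integral>\<sigma>(x) \<sigma>(y) H(x,y) / 2 - K\<^sup>2 ln 2 / 2 - \<integral>\<sigma> \<Sum>\<^sub>i ln\<^sub>- |x - x\<^sub>i|\<close>.
  As \<open>0 \<le> \<sigma> \<le> 1\<close>, the last integral is at most \<open>\<integral>\<Sum>\<^sub>i ln\<^sub>- |x - x\<^sub>i| < \<infinity>\<close>: this is the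
  lower bound. For lower semicontinuity pass to a subsequence realising the \<open>liminf\<close> and
  converging almost everywhere; Fatou's lemma handles the nonnegative double integral and
  dominated convergence the last term.\<close>

definition ln_pos :: "real \<Rightarrow> real" where "ln_pos r = max 0 (ln r)"
definition ln_neg :: "real \<Rightarrow> real" where "ln_neg r = max 0 (- ln r)"

lemma ln_pos_nonneg [simp]: "0 \<le> ln_pos r" by (simp add: ln_pos_def)
lemma ln_neg_nonneg [simp]: "0 \<le> ln_neg r" by (simp add: ln_neg_def)
lemma ln_pos_minus_ln_neg: "ln_pos r - ln_neg r = ln r" by (simp add: ln_pos_def ln_neg_def)

lemma borel_measurable_ln_pos [measurable]: "ln_pos \<in> borel_measurable borel"
  unfolding ln_pos_def by measurable
lemma borel_measurable_ln_neg [measurable]: "ln_neg \<in> borel_measurable borel"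
  unfolding ln_neg_def by measurable

lemma ln_pos_eq_ln_max_1: "0 \<le> r \<Longrightarrow> ln_pos r = ln (max 1 r)"
  by (cases "r \<le> 1"; cases "r = 0") (auto simp: ln_pos_def max_def)

lemma ln_neg_le_dyadic_sum:
  assumes "0 \<le> r"
  shows "ennreal (ln_neg r) \<le> (\<Sum>k. ennreal (ln 2) * indicator {..(1/2::real)^k} r)"
proof (cases "0 < r \<and> r < 1")
  case False
  then have "ln_neg r = 0" using assms by (auto simp: ln_neg_def)
  then show ?thesis by simp
next
  case True
  define m where "m = nat \<lfloor>log 2 (1/r)\<rfloor>"
  have "0 < log 2 (1/r)" using True by simp
  then have m: "real m \<le> log 2 (1/r)" "log 2 (1/r) < real m + 1"
    unfolding m_def by linarith+
  have "1/r < 2 powr (real m + 1)" using m(2) True by (subst (asm) log_less_iff) auto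
  then have "ln (1/r) < ln (2 powr (real m + 1))" using True by (subst ln_less_cancel_iff) auto
  then have "ln_neg r \<le> (real m + 1) * ln 2" using True by (simp add: ln_neg_def ln_powr ln_div)
  have "(2::real) ^ m \<le> 1/r" using m(1) True by (subst (asm) le_log_iff) (auto simp: powr_realpow)
  then have "r \<le> (1/2)^k" if "k \<le> m" for k
  proof -
    have "r * 2 ^ k \<le> r * 2 ^ m"
      using True power_increasing[OF that, of "2::real"] by (intro mult_left_mono) auto
    moreover have "r * 2 ^ m \<le> 1" using \<open>2 ^ m \<le> 1/r\<close> True by (simp add: field_simps)
    ultimately have "r * 2 ^ k \<le> 1" by linarith
    then show ?thesis using True by (simp add: field_simps power_divide)
  qed
  then have "indicator {..(1/2::real)^k} r = (1::ennreal)" if "k < Suc m" for k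
    using that by (simp add: indicator_def)
  then have "(\<Sum>k<Suc m. ennreal (ln 2) * indicator {..(1/2::real)^k} r) = ennreal ((real m + 1) * ln 2)"
    by (simp add: ennreal_mult' ennreal_of_nat_eq_real_of_nat[symmetric] mult.commute add.commute)
  moreover have "ennreal (ln_neg r) \<le> ennreal ((real m + 1) * ln 2)"
    using \<open>ln_neg r \<le> (real m + 1) * ln 2\<close> by (rule ennreal_leI)
  moreover have "(\<Sum>k<Suc m. ennreal (ln 2) * indicator {..(1/2::real)^k} r)
      \<le> (\<Sum>k. ennreal (ln 2) * indicator {..(1/2::real)^k} r)"
    by (intro sum_le_suminf) auto
  ultimately show ?thesis by (metis order_trans)
qed

lemma nn_integral_ln_neg_norm_finite:
  "(\<integral>\<^sup>+ x. ennreal (ln_neg (norm (x::'a::euclidean_space))) \<partial>lborel) < \<infinity>"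
proof -
  define V where "V = unit_ball_vol (DIM('a))"
  define q :: real where "q = (1/2) ^ DIM('a)"
  have [measurable]: "cball (0::'a) r \<in> sets borel" for r by (simp add: borel_closed)
  have "0 \<le> V" unfolding V_def by simp
  have "q < 1" unfolding q_def using DIM_positive[where 'a='a] by (simp add: power_less_one_iff)
  have "(\<integral>\<^sup>+ x. ennreal (ln_neg (norm (x::'a))) \<partial>lborel)
     \<le> (\<integral>\<^sup>+ x. (\<Sum>k. ennreal (ln 2) * indicator (cball (0::'a) ((1/2)^k)) x) \<partial>lborel)"
  proof (intro nn_integral_mono)
    fix x :: 'a
    have "indicator (cball 0 r) x = (indicator {..r} (norm x) :: ennreal)" for r
      by (simp add: indicator_def)
    then show "ennreal (ln_neg (norm x)) \<le> (\<Sum>k. ennreal (ln 2) * indicator (cball 0 ((1/2)^k)) x)"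
      using ln_neg_le_dyadic_sum[of "norm x"] by simp
  qed
  also have "\<dots> = (\<Sum>k. ennreal (ln 2) * emeasure lborel (cball (0::'a) ((1/2)^k)))"
    by (subst nn_integral_suminf) (simp_all add: nn_integral_cmult_indicator)
  also have "\<dots> = (\<Sum>k. ennreal (ln 2 * V * q ^ k))"
    by (simp add: emeasure_cball V_def q_def ennreal_mult' mult.assoc
        flip: power_mult power_mult_distrib)
       (simp add: mult.commute)
  also have "\<dots> = ennreal (\<Sum>k. ln 2 * V * q ^ k)"
    using \<open>0 \<le> V\<close> \<open>q < 1\<close>
    by (intro suminf_ennreal2) (auto simp: q_def intro!: summable_mult summable_geometric)
  also have "\<dots> < \<infinity>" by simp
  finally show ?thesis .
qed

lemma nn_integral_ln_neg_norm_diff: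
  fixes c :: "'a::euclidean_space"
  shows "(\<integral>\<^sup>+ x. ennreal (ln_neg (norm (x - c))) \<partial>lborel)
     = (\<integral>\<^sup>+ x. ennreal (ln_neg (norm (x::'a))) \<partial>lborel)"
proof -
  have "(\<integral>\<^sup>+ x. ennreal (ln_neg (norm (x::'a))) \<partial>lborel)
      = (\<integral>\<^sup>+ x. ennreal (ln_neg (norm x)) \<partial>distr lborel borel ((+) (-c)))"
    by (simp add: lborel_distr_plus)
  also have "\<dots> = (\<integral>\<^sup>+ x. ennreal (ln_neg (norm (-c + x))) \<partial>lborel)"
    by (subst nn_integral_distr) auto
  finally show ?thesis by simp
qed

lemma integrable_ln_neg_norm_diff:
  fixes c :: "'a::euclidean_space"
  shows "integrable lborel (\<lambda>x. ln_neg (norm (x - c)))"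
  using nn_integral_ln_neg_norm_finite
  by (intro integrableI_bounded) (simp_all add: nn_integral_ln_neg_norm_diff)

lemma two_plus_norm_pos [simp]: "0 < 2 + norm x"
  by (simp add: add_pos_nonneg)

lemma ln_2_plus_norm_nonneg [simp]: "0 \<le> ln (2 + norm x)"
  using norm_ge_zero[of x] by (intro ln_ge_zero) linarith

lemma ln_pos_norm_diff_le: "ln_pos (norm (x - c)) \<le> ln (2 + norm x) + ln (2 + norm c)"
proof -
  have "(2 + norm x) * (2 + norm c) = 4 + 2 * norm x + 2 * norm c + norm x * norm c"
    by (simp add: algebra_simps)
  then have "max 1 (norm (x - c)) \<le> (2 + norm x) * (2 + norm c)"
    using norm_triangle_ineq4[of x c] mult_nonneg_nonneg[of "norm x" "norm c"]
    by (smt (verit) norm_ge_zero)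
  then have "ln (max 1 (norm (x - c))) \<le> ln ((2 + norm x) * (2 + norm c))"
    by (subst ln_le_cancel_iff) (auto intro: add_pos_nonneg)
  then show ?thesis by (simp add: ln_pos_eq_ln_max_1 ln_mult_pos add_pos_nonneg)
qed

lemma ln_norm_diff_le:
  fixes x y c :: "'a::real_normed_vector"
  shows "ln (norm (x - y)) \<le> ln 2 + ln_pos (norm (x - c)) + ln_pos (norm (y - c))"
proof (cases "x = y")
  case False
  define A where "A = max 1 (norm (x - c))"
  define B where "B = max 1 (norm (y - c))"
  have "1 \<le> A" "1 \<le> B" unfolding A_def B_def by auto
  have "norm (x - y) \<le> norm (x - c) + norm (y - c)"
    using norm_triangle_ineq4[of "x - c" "y - c"] by simp
  also have "\<dots> \<le> A * B + A * B"
  proof -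
    have "A \<le> A * B" "B \<le> A * B"
      using \<open>1 \<le> A\<close> \<open>1 \<le> B\<close> by (simp_all add: mult_le_cancel_left1 mult_le_cancel_right1)
    moreover have "norm (x - c) \<le> A" "norm (y - c) \<le> B" unfolding A_def B_def by simp_all
    ultimately show ?thesis by linarith
  qed
  finally have "ln (norm (x - y)) \<le> ln (2 * A * B)"
    using False \<open>1 \<le> A\<close> \<open>1 \<le> B\<close> by (subst ln_le_cancel_iff) auto
  then show ?thesis
    using \<open>1 \<le> A\<close> \<open>1 \<le> B\<close> by (simp add: ln_mult_pos ln_pos_eq_ln_max_1 A_def B_def)
qed simp

lemma (in pair_sigma_finite) integrable_mult_fst_snd:
  fixes f :: "'a \<Rightarrow> real" and g :: "'b \<Rightarrow> real"
  assumes f: "integrable M1 f" and g: "integrable M2 g"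
  shows "integrable (M1 \<Otimes>\<^sub>M M2) (\<lambda>z. f (fst z) * g (snd z))"
proof (rule integrableI_bounded)
  have [measurable]: "f \<in> borel_measurable M1" "g \<in> borel_measurable M2" using f g by auto
  have "(\<integral>\<^sup>+ z. ennreal (norm (f (fst z) * g (snd z))) \<partial>(M1 \<Otimes>\<^sub>M M2))
      = (\<integral>\<^sup>+ x. \<integral>\<^sup>+ y. ennreal (norm (f x)) * ennreal (norm (g y)) \<partial>M2 \<partial>M1)"
    by (subst M2.nn_integral_fst[symmetric]) (auto simp: abs_mult ennreal_mult)
  also have "\<dots> = (\<integral>\<^sup>+ x. ennreal (norm (f x)) \<partial>M1) * (\<integral>\<^sup>+ y. ennreal (norm (g y)) \<partial>M2)"
    by (simp add: nn_integral_cmult nn_integral_multc)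
  also have "\<dots> < \<infinity>"
    using f g by (simp add: integrable_iff_bounded ennreal_mult_less_top)
  finally show "(\<integral>\<^sup>+ z. ennreal (norm (f (fst z) * g (snd z))) \<partial>(M1 \<Otimes>\<^sub>M M2)) < \<infinity>" .
qed (use f g in auto)

lemma (in pair_sigma_finite) integral_mult_fst_snd:
  fixes f :: "'a \<Rightarrow> real" and g :: "'b \<Rightarrow> real"
  assumes f: "integrable M1 f" and g: "integrable M2 g"
  shows "(\<integral>z. f (fst z) * g (snd z) \<partial>(M1 \<Otimes>\<^sub>M M2)) = (\<integral>x. f x \<partial>M1) * (\<integral>y. g y \<partial>M2)"
  using integral_fst'[OF integrable_mult_fst_snd[OF f g]] by simp

lemma (in pair_sigma_finite) AE_pair_fst_snd:
  assumes "AE x in M1. P x" and "AE y in M2. Q y"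
  shows "AE z in M1 \<Otimes>\<^sub>M M2. P (fst z) \<and> Q (snd z)"
proof -
  obtain N1 where N1: "{x \<in> space M1. \<not> P x} \<subseteq> N1" "N1 \<in> null_sets M1"
    using assms(1) by (auto elim!: AE_E)
  obtain N2 where N2: "{y \<in> space M2. \<not> Q y} \<subseteq> N2" "N2 \<in> null_sets M2"
    using assms(2) by (auto elim!: AE_E)
  have "N1 \<times> space M2 \<union> space M1 \<times> N2 \<in> null_sets (M1 \<Otimes>\<^sub>M M2)"
    using N1(2) N2(2) by (intro null_sets.Un M2.times_in_null_sets1 M2.times_in_null_sets2) auto
  moreover have "{z \<in> space (M1 \<Otimes>\<^sub>M M2). \<not> (P (fst z) \<and> Q (snd z))} \<subseteq> N1 \<times> space M2 \<union> space M1 \<times> N2"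
    using N1(1) N2(1) by (auto simp: space_pair_measure)
  ultimately show ?thesis by (rule AE_I')
qed

lemma ereal_le_liminf_of_ennreal:
  fixes f :: "nat \<Rightarrow> real"
  assumes "\<And>n. 0 \<le> f n" and "0 \<le> a" and "ennreal a \<le> liminf (\<lambda>n. ennreal (f n))"
  shows "ereal a \<le> liminf (\<lambda>n. ereal (f n))"
proof -
  have "liminf (\<lambda>n. enn2ereal (ennreal (f n))) = enn2ereal (liminf (\<lambda>n. ennreal (f n)))"
    by (intro Liminf_compose_continuous_mono continuous_on_enn2ereal monoI)
       (simp_all add: less_eq_ennreal.rep_eq)
  moreover have "enn2ereal (ennreal a) \<le> enn2ereal (liminf (\<lambda>n. ennreal (f n)))"
    using assms(3) by (simp add: less_eq_ennreal.rep_eq)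
  ultimately show ?thesis using assms(1,2) by simp
qed

definition nuc_ln_pos :: "nat \<Rightarrow> (nat \<Rightarrow> 'a::euclidean_space) \<Rightarrow> 'a \<Rightarrow> real" where
  "nuc_ln_pos K xs x = (\<Sum>i=1..K. ln_pos (norm (x - xs i)))"

definition nuc_ln_neg :: "nat \<Rightarrow> (nat \<Rightarrow> 'a::euclidean_space) \<Rightarrow> 'a \<Rightarrow> real" where
  "nuc_ln_neg K xs x = (\<Sum>i=1..K. ln_neg (norm (x - xs i)))"

lemma nuc_ln_pos_nonneg [simp]: "0 \<le> nuc_ln_pos K xs x"
  unfolding nuc_ln_pos_def by (intro sum_nonneg) simp

lemma nuc_ln_neg_nonneg [simp]: "0 \<le> nuc_ln_neg K xs x"
  unfolding nuc_ln_neg_def by (intro sum_nonneg) simp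

lemma borel_measurable_nuc_ln_pos [measurable]: "nuc_ln_pos K xs \<in> borel_measurable borel"
  unfolding nuc_ln_pos_def by measurable

lemma borel_measurable_nuc_ln_neg [measurable]: "nuc_ln_neg K xs \<in> borel_measurable borel"
  unfolding nuc_ln_neg_def by measurable

lemma V_nuc_eq: "V_nuc K xs x = nuc_ln_neg K xs x - nuc_ln_pos K xs x"
  unfolding V_nuc_def nuc_ln_pos_def nuc_ln_neg_def
  by (simp add: sum_subtractf flip: ln_pos_minus_ln_neg)

lemma integrable_nuc_ln_neg: "integrable lborel (nuc_ln_neg K xs)"
  unfolding nuc_ln_neg_def by (intro Bochner_Integration.integrable_sum integrable_ln_neg_norm_diff)

definition nuc_ln_bound :: "nat \<Rightarrow> (nat \<Rightarrow> 'a::euclidean_space) \<Rightarrow> 'a \<Rightarrow> 'a \<Rightarrow> real" where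
  "nuc_ln_bound K xs x y = ln 2 + (nuc_ln_pos K xs x + nuc_ln_pos K xs y) / real K"

lemma nuc_ln_bound_nonneg [simp]: "0 \<le> nuc_ln_bound K xs x y"
  unfolding nuc_ln_bound_def by simp

lemma ln_norm_diff_le_nuc_ln_bound:
  assumes "1 \<le> K"
  shows "ln (norm (x - y)) \<le> nuc_ln_bound K xs x y"
proof -
  have "(\<Sum>i=1..K. ln (norm (x - y)))
      \<le> (\<Sum>i=1..K. ln 2 + ln_pos (norm (x - xs i)) + ln_pos (norm (y - xs i)))"
    by (intro sum_mono ln_norm_diff_le)
  then have "real K * ln (norm (x - y)) \<le> real K * ln 2 + nuc_ln_pos K xs x + nuc_ln_pos K xs y"
    by (simp add: nuc_ln_pos_def sum.distrib)
  then show ?thesis using assms by (simp add: nuc_ln_bound_def field_simps)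
qed

definition TF_kernel :: "nat \<Rightarrow> (nat \<Rightarrow> 'a::euclidean_space) \<Rightarrow> 'a \<Rightarrow> 'a \<Rightarrow> real" where
  "TF_kernel K xs x y = nuc_ln_bound K xs x y - ln (norm (x - y))"

lemma borel_measurable_TF_kernel [measurable]:
  "(\<lambda>z. TF_kernel K xs (fst z) (snd z)) \<in> borel_measurable (borel \<Otimes>\<^sub>M borel)"
  unfolding TF_kernel_def nuc_ln_bound_def by measurable

lemma TF_kernel_nonneg: "1 \<le> K \<Longrightarrow> 0 \<le> TF_kernel K xs x y"
  using ln_norm_diff_le_nuc_ln_bound by (simp add: TF_kernel_def)

definition TF_interaction :: "nat \<Rightarrow> (nat \<Rightarrow> 'a::euclidean_space) \<Rightarrow> ('a \<Rightarrow> real) \<Rightarrow> real" where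
  "TF_interaction K xs \<sigma> =
     (\<integral>z. \<sigma> (fst z) * \<sigma> (snd z) * TF_kernel K xs (fst z) (snd z) \<partial>(lborel \<Otimes>\<^sub>M lborel))"

locale TF_density =
  fixes K :: nat and \<sigma> :: "'a::euclidean_space \<Rightarrow> real"
  assumes K_ge_1: "1 \<le> K"
    and borel_measurable [measurable]: "\<sigma> \<in> borel_measurable borel"
    and nonneg: "0 \<le> \<sigma> x"
    and le_1: "\<sigma> x \<le> 1"
    and integrable_log_weight: "integrable lborel (\<lambda>x. \<sigma> x * ln (2 + norm x))"
    and mass: "(\<integral>x. \<sigma> x \<partial>lborel) = real K"
begin

lemma integrable: "integrable lborel \<sigma>"
proof (rule Bochner_Integration.integrable_bound)
  show "integrable lborel (\<lambda>x. \<sigma> x * ln (2 + norm x) / ln 2)"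
    using integrable_log_weight by simp
  show "AE x in lborel. norm (\<sigma> x) \<le> norm (\<sigma> x * ln (2 + norm x) / ln 2)"
  proof (intro AE_I2)
    fix x :: 'a
    have "ln 2 \<le> ln (2 + norm x)" by simp
    then have "\<sigma> x * ln 2 \<le> \<sigma> x * ln (2 + norm x)" using nonneg by (rule mult_left_mono)
    then show "norm (\<sigma> x) \<le> norm (\<sigma> x * ln (2 + norm x) / ln 2)"
      using nonneg[of x] by (simp add: field_simps)
  qed
qed simp

lemma integrable_mult_ln_pos_norm_diff: "integrable lborel (\<lambda>x. \<sigma> x * ln_pos (norm (x - c)))"
proof (rule Bochner_Integration.integrable_bound)
  show "integrable lborel (\<lambda>x. \<sigma> x * ln (2 + norm x) + ln (2 + norm c) * \<sigma> x)"
    using integrable_log_weight integrable by simp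
  show "AE x in lborel. norm (\<sigma> x * ln_pos (norm (x - c)))
      \<le> norm (\<sigma> x * ln (2 + norm x) + ln (2 + norm c) * \<sigma> x)"
  proof (intro AE_I2)
    fix x :: 'a
    have "\<sigma> x * ln_pos (norm (x - c)) \<le> \<sigma> x * (ln (2 + norm x) + ln (2 + norm c))"
      using ln_pos_norm_diff_le nonneg by (rule mult_left_mono)
    moreover have "0 \<le> ln (2 + norm x)" "0 \<le> ln (2 + norm c)" by simp_all
    ultimately show "norm (\<sigma> x * ln_pos (norm (x - c)))
        \<le> norm (\<sigma> x * ln (2 + norm x) + ln (2 + norm c) * \<sigma> x)"
      using nonneg[of x] by (simp add: algebra_simps)
  qed
qed simp

lemma integrable_mult_ln_neg_norm_diff: "integrable lborel (\<lambda>x. \<sigma> x * ln_neg (norm (x - c)))"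
  using integrable_ln_neg_norm_diff
  by (rule Bochner_Integration.integrable_bound)
     (use nonneg le_1 in \<open>auto intro!: AE_I2 mult_left_le_one_le\<close>)

lemma integrable_mult_nuc_ln_pos: "integrable lborel (\<lambda>x. \<sigma> x * nuc_ln_pos K xs x)"
  unfolding nuc_ln_pos_def sum_distrib_left
  by (intro Bochner_Integration.integrable_sum integrable_mult_ln_pos_norm_diff)

lemma integrable_mult_nuc_ln_neg: "integrable lborel (\<lambda>x. \<sigma> x * nuc_ln_neg K xs x)"
  unfolding nuc_ln_neg_def sum_distrib_left
  by (intro Bochner_Integration.integrable_sum integrable_mult_ln_neg_norm_diff)

lemma
  shows integrable_pair_nuc_ln_bound:
    "integrable (lborel \<Otimes>\<^sub>M lborel) (\<lambda>z. \<sigma> (fst z) * \<sigma> (snd z) * nuc_ln_bound K xs (fst z) (snd z))"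
  and integral_pair_nuc_ln_bound:
    "(\<integral>z. \<sigma> (fst z) * \<sigma> (snd z) * nuc_ln_bound K xs (fst z) (snd z) \<partial>(lborel \<Otimes>\<^sub>M lborel))
       = ln 2 * real K ^ 2 + 2 * (\<integral>x. \<sigma> x * nuc_ln_pos K xs x \<partial>lborel)"
proof -
  let ?P = "\<lambda>x. \<sigma> x * nuc_ln_pos K xs x"
  have eq: "(\<lambda>z. \<sigma> (fst z) * \<sigma> (snd z) * nuc_ln_bound K xs (fst z) (snd z))
    = (\<lambda>z. ln 2 * (\<sigma> (fst z) * \<sigma> (snd z)) + (?P (fst z) * \<sigma> (snd z) + \<sigma> (fst z) * ?P (snd z)) / real K)"
    by (auto simp: nuc_ln_bound_def field_simps)
  note integrable_mult_nuc_ln_pos[of xs]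
  note products = lborel_pair.integrable_mult_fst_snd[OF integrable integrable]
    lborel_pair.integrable_mult_fst_snd[OF this integrable]
    lborel_pair.integrable_mult_fst_snd[OF integrable this]
    lborel_pair.integral_mult_fst_snd[OF integrable integrable]
    lborel_pair.integral_mult_fst_snd[OF this integrable]
    lborel_pair.integral_mult_fst_snd[OF integrable this]
  show "integrable (lborel \<Otimes>\<^sub>M lborel) (\<lambda>z. \<sigma> (fst z) * \<sigma> (snd z) * nuc_ln_bound K xs (fst z) (snd z))"
    unfolding eq using products by simp
  show "(\<integral>z. \<sigma> (fst z) * \<sigma> (snd z) * nuc_ln_bound K xs (fst z) (snd z) \<partial>(lborel \<Otimes>\<^sub>M lborel))
       = ln 2 * real K ^ 2 + 2 * (\<integral>x. \<sigma> x * nuc_ln_pos K xs x \<partial>lborel)"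
    unfolding eq using products K_ge_1 by (simp add: mass) (simp add: power2_eq_square field_simps)
qed

lemma integrable_pair_ln_neg_norm_diff:
  "integrable (lborel \<Otimes>\<^sub>M lborel) (\<lambda>z. \<sigma> (snd z) * ln_neg (norm (fst z - snd z)))"
proof (rule integrableI_bounded)
  have "(\<integral>\<^sup>+ z. ennreal (norm (\<sigma> (snd z) * ln_neg (norm (fst z - snd z)))) \<partial>(lborel \<Otimes>\<^sub>M lborel))
      = (\<integral>\<^sup>+ y. \<integral>\<^sup>+ x. ennreal (\<sigma> y) * ennreal (ln_neg (norm (x - y))) \<partial>lborel \<partial>lborel)"
    using nonneg by (subst lborel_pair.nn_integral_snd[symmetric]) (auto simp: ennreal_mult)
  also have "\<dots> = (\<integral>\<^sup>+ y. ennreal (\<sigma> y) \<partial>lborel) * (\<integral>\<^sup>+ x. ennreal (ln_neg (norm (x::'a))) \<partial>lborel)"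
    by (simp add: nn_integral_cmult nn_integral_multc nn_integral_ln_neg_norm_diff)
  also have "\<dots> < \<infinity>"
    using integrable nonneg nn_integral_ln_neg_norm_finite[where 'a='a]
    by (simp add: integrable_iff_bounded ennreal_mult_less_top)
  finally show "(\<integral>\<^sup>+ z. ennreal (norm (\<sigma> (snd z) * ln_neg (norm (fst z - snd z)))) \<partial>(lborel \<Otimes>\<^sub>M lborel)) < \<infinity>" .
qed simp

text \<open>The logarithmic singularity is controlled from above by \<open>nuc_ln_bound\<close> and from
  below by the locally integrable \<open>ln_neg\<close>.\<close>
lemma integrable_pair_ln_norm_diff:
  "integrable (lborel \<Otimes>\<^sub>M lborel) (\<lambda>z. \<sigma> (fst z) * ln (norm (fst z - snd z)) * \<sigma> (snd z))"
proof (rule Bochner_Integration.integrable_bound)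
  show "integrable (lborel \<Otimes>\<^sub>M lborel) (\<lambda>z. \<sigma> (fst z) * \<sigma> (snd z) * nuc_ln_bound K xs (fst z) (snd z)
      + \<sigma> (snd z) * ln_neg (norm (fst z - snd z)))"
    using integrable_pair_nuc_ln_bound integrable_pair_ln_neg_norm_diff by simp
  show "AE z in lborel \<Otimes>\<^sub>M lborel. norm (\<sigma> (fst z) * ln (norm (fst z - snd z)) * \<sigma> (snd z))
      \<le> norm (\<sigma> (fst z) * \<sigma> (snd z) * nuc_ln_bound K xs (fst z) (snd z)
        + \<sigma> (snd z) * ln_neg (norm (fst z - snd z)))"
  proof (intro AE_I2)
    fix z :: "'a \<times> 'a"
    obtain x y where z: "z = (x, y)" by fastforce
    have "\<bar>ln (norm (x - y))\<bar> \<le> nuc_ln_bound K xs x y + ln_neg (norm (x - y))"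
      using ln_norm_diff_le_nuc_ln_bound[OF K_ge_1, of x y xs] nuc_ln_bound_nonneg[of K xs x y]
      by (auto simp: ln_neg_def abs_if max_def)
    then have "\<sigma> x * \<sigma> y * \<bar>ln (norm (x - y))\<bar>
        \<le> \<sigma> x * \<sigma> y * nuc_ln_bound K xs x y + \<sigma> x * \<sigma> y * ln_neg (norm (x - y))"
      using nonneg by (simp add: mult_left_mono flip: distrib_left)
    also have "\<dots> \<le> \<sigma> x * \<sigma> y * nuc_ln_bound K xs x y + \<sigma> y * ln_neg (norm (x - y))"
      using nonneg le_1 by (simp add: mult_left_le_one_le mult.assoc)
    finally show "norm (\<sigma> (fst z) * ln (norm (fst z - snd z)) * \<sigma> (snd z))
      \<le> norm (\<sigma> (fst z) * \<sigma> (snd z) * nuc_ln_bound K xs (fst z) (snd z)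
        + \<sigma> (snd z) * ln_neg (norm (fst z - snd z)))"
      using nonneg[of x] nonneg[of y] by (simp add: z abs_mult mult_ac)
  qed
qed simp

lemma integrable_pair_TF_kernel:
  "integrable (lborel \<Otimes>\<^sub>M lborel) (\<lambda>z. \<sigma> (fst z) * \<sigma> (snd z) * TF_kernel K xs (fst z) (snd z))"
  using integrable_pair_nuc_ln_bound integrable_pair_ln_norm_diff
  by (simp add: TF_kernel_def right_diff_distrib mult_ac)

lemma TF_interaction_eq:
  "TF_interaction K xs \<sigma> = ln 2 * real K ^ 2 + 2 * (\<integral>x. \<sigma> x * nuc_ln_pos K xs x \<partial>lborel)
     - (\<integral>z. \<sigma> (fst z) * ln (norm (fst z - snd z)) * \<sigma> (snd z) \<partial>(lborel \<Otimes>\<^sub>M lborel))"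
  using integrable_pair_nuc_ln_bound integrable_pair_ln_norm_diff
  by (simp add: TF_interaction_def TF_kernel_def right_diff_distrib mult_ac
      flip: integral_pair_nuc_ln_bound)

lemma TF_interaction_nonneg: "0 \<le> TF_interaction K xs \<sigma>"
  unfolding TF_interaction_def using nonneg TF_kernel_nonneg[OF K_ge_1]
  by (intro integral_nonneg_AE AE_I2 mult_nonneg_nonneg) auto

lemma ennreal_TF_interaction:
  "ennreal (TF_interaction K xs \<sigma>) = (\<integral>\<^sup>+ z. ennreal (\<sigma> (fst z) * \<sigma> (snd z) * TF_kernel K xs (fst z) (snd z))
     \<partial>(lborel \<Otimes>\<^sub>M lborel))"
  unfolding TF_interaction_def using nonneg TF_kernel_nonneg[OF K_ge_1]
  by (intro nn_integral_eq_integral[symmetric] integrable_pair_TF_kernel AE_I2 mult_nonneg_nonneg) auto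

end

lemma E_TF_eq:
  fixes \<sigma> :: "real^2 \<Rightarrow> real"
  assumes "TF_density K \<sigma>"
  shows "E_TF K xs \<sigma> = TF_interaction K xs \<sigma> / 2 - ln 2 * real K ^ 2 / 2
    - (\<integral>x. \<sigma> x * nuc_ln_neg K xs x \<partial>lborel)"
proof -
  interpret TF_density K \<sigma> by fact
  have "(\<integral>x. V_nuc K xs x * \<sigma> x \<partial>lborel)
      = (\<integral>x. \<sigma> x * nuc_ln_neg K xs x \<partial>lborel) - (\<integral>x. \<sigma> x * nuc_ln_pos K xs x \<partial>lborel)"
    using integrable_mult_nuc_ln_neg integrable_mult_nuc_ln_pos
    by (simp add: V_nuc_eq right_diff_distrib mult.commute flip: Bochner_Integration.integral_diff)
  then show ?thesis by (simp add: E_TF_def D_TF_def TF_interaction_eq field_simps)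
qed

lemma E_TF_lower_bound:
  fixes \<sigma> :: "real^2 \<Rightarrow> real"
  assumes "TF_density K \<sigma>"
  shows "- (ln 2 * real K ^ 2 / 2) - (\<integral>x. nuc_ln_neg K xs x \<partial>lborel) \<le> E_TF K xs \<sigma>"
proof -
  interpret TF_density K \<sigma> by fact
  have "(\<integral>x. \<sigma> x * nuc_ln_neg K xs x \<partial>lborel) \<le> (\<integral>x. nuc_ln_neg K xs x \<partial>lborel)"
    using integrable_mult_nuc_ln_neg integrable_nuc_ln_neg nonneg le_1
    by (intro integral_mono) (auto intro: mult_left_le_one_le)
  then show ?thesis using E_TF_eq[OF assms, of xs] TF_interaction_nonneg[of xs] by linarith
qed

lemma TF_interaction_lsc_AE:
  fixes \<sigma> :: "'a::euclidean_space \<Rightarrow> real" and s :: "nat \<Rightarrow> 'a \<Rightarrow> real"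
  assumes \<sigma>: "TF_density K \<sigma>" and s: "\<And>n. TF_density K (s n)"
    and conv: "AE x in lborel. (\<lambda>n. s n x) \<longlonglongrightarrow> \<sigma> x"
  shows "ereal (TF_interaction K xs \<sigma>) \<le> liminf (\<lambda>n. ereal (TF_interaction K xs (s n)))"
proof (rule ereal_le_liminf_of_ennreal)
  interpret \<sigma>: TF_density K \<sigma> by fact
  have [measurable]: "s n \<in> borel_measurable borel" for n using s TF_density.borel_measurable by blast
  define F where "F f z = ennreal (f (fst z) * f (snd z) * TF_kernel K xs (fst z) (snd z))" for f z
  have "AE z in lborel \<Otimes>\<^sub>M lborel. (\<lambda>n. F (s n) z) \<longlonglongrightarrow> F \<sigma> z"
    using lborel_pair.AE_pair_fst_snd[OF conv conv]
    by eventually_elim (auto simp: F_def intro!: tendsto_ennrealI tendsto_mult)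
  then have "ennreal (TF_interaction K xs \<sigma>) = (\<integral>\<^sup>+ z. liminf (\<lambda>n. F (s n) z) \<partial>(lborel \<Otimes>\<^sub>M lborel))"
    unfolding \<sigma>.ennreal_TF_interaction F_def[symmetric]
    by (intro nn_integral_cong_AE) (auto elim!: eventually_mono intro: lim_imp_Liminf[symmetric])
  also have "\<dots> \<le> liminf (\<lambda>n. \<integral>\<^sup>+ z. F (s n) z \<partial>(lborel \<Otimes>\<^sub>M lborel))"
    by (intro nn_integral_liminf) (simp add: F_def)
  also have "\<dots> = liminf (\<lambda>n. ennreal (TF_interaction K xs (s n)))"
    unfolding F_def using TF_density.ennreal_TF_interaction[OF s] by simp
  finally show "ennreal (TF_interaction K xs \<sigma>) \<le> liminf (\<lambda>n. ennreal (TF_interaction K xs (s n)))" .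
  show "0 \<le> TF_interaction K xs (s n)" for n using TF_density.TF_interaction_nonneg[OF s] .
  show "0 \<le> TF_interaction K xs \<sigma>" by (rule \<sigma>.TF_interaction_nonneg)
qed

lemma E_TF_lsc_AE:
  fixes \<sigma> :: "real^2 \<Rightarrow> real" and s :: "nat \<Rightarrow> real^2 \<Rightarrow> real"
  assumes \<sigma>: "TF_density K \<sigma>" and s: "\<And>n. TF_density K (s n)"
    and conv: "AE x in lborel. (\<lambda>n. s n x) \<longlonglongrightarrow> \<sigma> x"
  shows "ereal (E_TF K xs \<sigma>) \<le> liminf (\<lambda>n. ereal (E_TF K xs (s n)))"
proof -
  interpret TF_density K \<sigma> by fact
  have [measurable]: "s n \<in> borel_measurable borel" for n using s TF_density.borel_measurable by blast
  define I where "I f = TF_interaction K xs f" for f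
  define r where "r f = - (ln 2 * real K ^ 2 / 2) - (\<integral>x. f x * nuc_ln_neg K xs x \<partial>lborel)" for f
  have E: "E_TF K xs f = I f * (1/2) + r f" if "TF_density K f" for f
    using E_TF_eq[OF that] by (simp add: I_def r_def)
  have "(\<lambda>n. \<integral>x. s n x * nuc_ln_neg K xs x \<partial>lborel) \<longlonglongrightarrow> (\<integral>x. \<sigma> x * nuc_ln_neg K xs x \<partial>lborel)"
  proof (rule integral_dominated_convergence[where w="nuc_ln_neg K xs"])
    show "AE x in lborel. (\<lambda>n. s n x * nuc_ln_neg K xs x) \<longlonglongrightarrow> \<sigma> x * nuc_ln_neg K xs x"
      using conv by eventually_elim (auto intro: tendsto_mult)
    show "AE x in lborel. norm (s n x * nuc_ln_neg K xs x) \<le> nuc_ln_neg K xs x" for n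
      using TF_density.nonneg[OF s] TF_density.le_1[OF s]
      by (intro AE_I2) (simp add: abs_mult mult_left_le_one_le)
  qed (simp_all add: integrable_nuc_ln_neg)
  then have r_conv: "(\<lambda>n. ereal (r (s n))) \<longlonglongrightarrow> ereal (r \<sigma>)"
    unfolding r_def by (intro tendsto_ereal tendsto_intros)
  have "ereal (E_TF K xs \<sigma>) = ereal (I \<sigma>) * ereal (1/2) + ereal (r \<sigma>)"
    by (simp add: E[OF \<sigma>])
  also have "\<dots> \<le> liminf (\<lambda>n. ereal (I (s n))) * ereal (1/2) + ereal (r \<sigma>)"
    using TF_interaction_lsc_AE[OF \<sigma> s conv] unfolding I_def
    by (intro add_right_mono ereal_mult_right_mono) simp_all
  also have "\<dots> = ereal (r \<sigma>) + liminf (\<lambda>n. ereal (I (s n)) * ereal (1/2))"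
    using Liminf_ereal_mult_right[of sequentially "1/2" "\<lambda>n. ereal (I (s n))"]
    by (simp add: add.commute)
  also have "\<dots> = liminf (\<lambda>n. ereal (r (s n)) + ereal (I (s n)) * ereal (1/2))"
    by (rule ereal_liminf_lim_add[symmetric]) (use r_conv in simp_all)
  also have "\<dots> = liminf (\<lambda>n. ereal (E_TF K xs (s n)))"
    by (simp add: E[OF s] add.commute)
  finally show ?thesis .
qed

lemma E_TF_lsc_L1:
  fixes \<sigma> :: "real^2 \<Rightarrow> real" and s :: "nat \<Rightarrow> real^2 \<Rightarrow> real"
  assumes \<sigma>: "TF_density K \<sigma>" and s: "\<And>n. TF_density K (s n)"
    and conv: "(\<lambda>n. \<integral>x. \<bar>s n x - \<sigma> x\<bar> \<partial>lborel) \<longlonglongrightarrow> 0"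
  shows "ereal (E_TF K xs \<sigma>) \<le> liminf (\<lambda>n. ereal (E_TF K xs (s n)))"
proof -
  let ?L = "liminf (\<lambda>n. ereal (E_TF K xs (s n)))"
  obtain r where r: "strict_mono r" "(\<lambda>n. ereal (E_TF K xs (s (r n)))) \<longlonglongrightarrow> ?L"
    using liminf_subseq_lim[of "\<lambda>n. ereal (E_TF K xs (s n))"] by (auto simp: comp_def)
  have "(\<lambda>n. \<integral>x. norm (s (r n) x - \<sigma> x) \<partial>lborel) \<longlonglongrightarrow> 0"
    using LIMSEQ_subseq_LIMSEQ[OF conv r(1)] by (simp add: comp_def)
  then obtain q where q: "strict_mono q" "AE x in lborel. (\<lambda>n. s (r (q n)) x - \<sigma> x) \<longlonglongrightarrow> 0"
    using tendsto_L1_AE_subseq[of lborel "\<lambda>n x. s (r n) x - \<sigma> x"]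
      TF_density.integrable[OF s] TF_density.integrable[OF \<sigma>] by auto
  have "AE x in lborel. (\<lambda>n. s (r (q n)) x) \<longlonglongrightarrow> \<sigma> x"
    using q(2) by eventually_elim (simp add: LIM_zero_iff)
  then have "ereal (E_TF K xs \<sigma>) \<le> liminf (\<lambda>n. ereal (E_TF K xs (s (r (q n)))))"
    by (intro E_TF_lsc_AE \<sigma> s)
  also have "\<dots> = ?L"
    using LIMSEQ_subseq_LIMSEQ[OF r(2) q(1)] by (intro lim_imp_Liminf) (simp_all add: comp_def)
  finally show ?thesis .
qed

text \<open>\<open>E_TF\<close> only sees the almost-everywhere class of a density, so an element of \<open>M_TF\<close>
  may be replaced by a representative with \<open>0 \<le> \<sigma> \<le> 1\<close> everywhere.\<close>
definition clamp01 :: "('a \<Rightarrow> real) \<Rightarrow> 'a \<Rightarrow> real" where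
  "clamp01 f x = max 0 (min 1 (f x))"

lemma borel_measurable_clamp01 [measurable]:
  assumes [measurable]: "f \<in> borel_measurable M"
  shows "clamp01 f \<in> borel_measurable M"
  unfolding clamp01_def by measurable

lemma M_TF_borel_measurable: "f \<in> M_TF K \<Longrightarrow> f \<in> borel_measurable borel"
  by (simp add: M_TF_def)

lemma AE_clamp01_eq:
  assumes "f \<in> M_TF K"
  shows "AE x in lborel. clamp01 f x = f x"
proof -
  have "AE x in lborel. 0 \<le> f x \<and> f x \<le> 1" using assms by (simp add: M_TF_def)
  then show ?thesis by eventually_elim (simp add: clamp01_def)
qed

lemma TF_density_clamp01:
  assumes "1 \<le> K" and f: "f \<in> M_TF K"
  shows "TF_density K (clamp01 f)"
proof
  have [measurable]: "f \<in> borel_measurable borel" using M_TF_borel_measurable[OF f] .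
  note AE_clamp01_eq[OF f]
  then have "AE x in lborel. f x * ln (2 + norm x) = clamp01 f x * ln (2 + norm x)"
    by eventually_elim simp
  moreover have "integrable lborel (\<lambda>x. f x * ln (2 + norm x))" using f by (simp add: M_TF_def)
  ultimately show "integrable lborel (\<lambda>x. clamp01 f x * ln (2 + norm x))"
    by (rule integrable_cong_AE_imp[rotated 2]) simp
  show "(\<integral>x. clamp01 f x \<partial>lborel) = real K"
    using f AE_clamp01_eq[OF f] unfolding M_TF_def by (subst integral_cong_AE[where g=f]) auto
qed (use assms M_TF_borel_measurable[OF f] in \<open>auto simp: clamp01_def\<close>)

lemma E_TF_cong_AE:
  assumes [measurable]: "f \<in> borel_measurable borel" "g \<in> borel_measurable borel"
    and eq: "AE x in lborel. f x = g x"
  shows "E_TF K xs f = E_TF K xs g"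
proof -
  have "(\<integral>x. V_nuc K xs x * f x \<partial>lborel) = (\<integral>x. V_nuc K xs x * g x \<partial>lborel)"
    using eq by (intro integral_cong_AE) (auto simp: V_nuc_def elim!: eventually_mono)
  moreover have "D_TF f f = D_TF g g"
  proof -
    have "AE z in lborel \<Otimes>\<^sub>M lborel. f (fst z) * ln (norm (fst z - snd z)) * f (snd z)
        = g (fst z) * ln (norm (fst z - snd z)) * g (snd z)"
      using lborel_pair.AE_pair_fst_snd[OF eq eq] by eventually_elim simp
    then show ?thesis unfolding D_TF_def by (subst integral_cong_AE) auto
  qed
  ultimately show ?thesis by (simp add: E_TF_def)
qed

lemma E_TF_clamp01: "f \<in> M_TF K' \<Longrightarrow> E_TF K xs (clamp01 f) = E_TF K xs f"
  using M_TF_borel_measurable AE_clamp01_eq by (intro E_TF_cong_AE) auto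

lemma integral_abs_diff_clamp01:
  assumes f: "f \<in> M_TF K" and g: "g \<in> M_TF K'"
  shows "(\<integral>x. \<bar>clamp01 f x - clamp01 g x\<bar> \<partial>lborel) = (\<integral>x. \<bar>f x - g x\<bar> \<partial>lborel)"
proof (rule integral_cong_AE)
  show "AE x in lborel. \<bar>clamp01 f x - clamp01 g x\<bar> = \<bar>f x - g x\<bar>"
    using AE_clamp01_eq[OF f] AE_clamp01_eq[OF g] by eventually_elim simp
qed (use M_TF_borel_measurable[OF f] M_TF_borel_measurable[OF g] in simp_all)

lemma E_TF_lower_bound_M_TF:
  assumes "1 \<le> K" and "\<sigma> \<in> M_TF K"
  shows "- (ln 2 * real K ^ 2 / 2) - (\<integral>x. nuc_ln_neg K xs x \<partial>lborel) \<le> E_TF K xs \<sigma>"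
  using E_TF_lower_bound[OF TF_density_clamp01[OF assms]] E_TF_clamp01[OF assms(2)] by simp

lemma E_TF_lsc_M_TF:
  assumes "1 \<le> K" and \<sigma>: "\<sigma> \<in> M_TF K" and s: "\<And>n. s n \<in> M_TF K"
    and conv: "(\<lambda>n. \<integral>x. \<bar>s n x - \<sigma> x\<bar> \<partial>lborel) \<longlonglongrightarrow> 0"
  shows "ereal (E_TF K xs \<sigma>) \<le> liminf (\<lambda>n. ereal (E_TF K xs (s n)))"
proof -
  have "ereal (E_TF K xs (clamp01 \<sigma>)) \<le> liminf (\<lambda>n. ereal (E_TF K xs (clamp01 (s n))))"
    using conv by (intro E_TF_lsc_L1 TF_density_clamp01 assms)
      (simp_all add: integral_abs_diff_clamp01[OF s \<sigma>])
  then show ?thesis using E_TF_clamp01[OF \<sigma>] E_TF_clamp01[OF s] by simp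
qed

theorem lemma3p4:
  fixes K :: nat and xs :: "nat \<Rightarrow> real^2"
  assumes "K \<ge> 1"
  shows "(\<exists>C. \<forall>\<sigma>\<in>M_TF K. C \<le> E_TF K xs \<sigma>)
    \<and> (\<forall>p::real. p > 1 \<longrightarrow>
         (\<forall>\<sigma> s. \<sigma> \<in> M_TF K \<and> (\<forall>n. s n \<in> M_TF K)
            \<and> ((\<lambda>n. \<integral>x. \<bar>s n x - \<sigma> x\<bar> \<partial>lborel) \<longlonglongrightarrow> 0)
            \<and> ((\<lambda>n. \<integral>x. \<bar>s n x - \<sigma> x\<bar> powr p \<partial>lborel) \<longlonglongrightarrow> 0)
            \<longrightarrow> ereal (E_TF K xs \<sigma>) \<le> liminf (\<lambda>n. ereal (E_TF K xs (s n)))))"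
  using E_TF_lower_bound_M_TF[OF assms] E_TF_lsc_M_TF[OF assms] by blast

end
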